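(* Let $0<p=p(n)\le 2/n$ with $n^2p=\omega(1)$. Let $H$ be an $n$-vertex connected graph with maximum degree $\Delta$, $1\le\Delta\le n^2p/57600$. Let $G=G(n,p)$ on $V(H)$ and $R:=H\cup G$. Then whp $\mathrm{td}(R)=\Omega(\mathrm{td}(H)+n^2p/\Delta)$.
   Context: $G(n,p)$ is the binomial random graph; asymptotics are as $n\to\infty$; whp means with probability $1-o(1)$; $\Omega$ hides an absolute positive constant. Treedepth $\mathrm{td}(G)$ is defined recursively: $\mathrm{td}(G)=1$ if $|V(G)|=1$; $\mathrm{td}(G)=1+\min_v\mathrm{td}(G-v)$ if $G$ is connected with $|V(G)|>1$; $\mathrm{td}(G)=\max_i\mathrm{td}(G_i)$ over the components $G_i$ if $G$ is disconnected. *)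

theory Defs
  imports Complex_Main
begin

definition all_pairs :: "nat \<Rightarrow> nat set set" where
  "all_pairs n = {{u, v} | u v. u < n \<and> v < n \<and> u \<noteq> v}"

definition is_graph :: "nat \<Rightarrow> nat set set \<Rightarrow> bool" where
  "is_graph n E \<longleftrightarrow> E \<subseteq> all_pairs n"

definition adj_in :: "nat set set \<Rightarrow> nat set \<Rightarrow> nat \<Rightarrow> nat \<Rightarrow> bool" where
  "adj_in E V u v \<longleftrightarrow> u \<in> V \<and> v \<in> V \<and> u \<noteq> v \<and> {u, v} \<in> E"

definition connected_on :: "nat set set \<Rightarrow> nat set \<Rightarrow> bool" where
  "connected_on E V \<longleftrightarrow> V \<noteq> {} \<and> (\<forall>u\<in>V. \<forall>v\<in>V. (adj_in E V)\<^sup>*\<^sup>* u v)"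

definition component_of :: "nat set set \<Rightarrow> nat set \<Rightarrow> nat \<Rightarrow> nat set" where
  "component_of E V u = {v \<in> V. (adj_in E V)\<^sup>*\<^sup>* u v}"

definition components :: "nat set set \<Rightarrow> nat set \<Rightarrow> nat set set" where
  "components E V = component_of E V ` V"

text \<open>In the disconnected case every component
is a proper subset of V; the guard C \<subset> V only serves the termination proof.\<close>
function td :: "nat set set \<Rightarrow> nat set \<Rightarrow> nat" where
  "td E V =
     (if infinite V \<or> V = {} then 0
      else if card V = 1 then 1
      else if connected_on E V then 1 + Min ((\<lambda>v. td E (V - {v})) ` V)
      else Max ((\<lambda>C. td E C) ` {C \<in> components E V. C \<subset> V}))"
  by pat_completeness auto
termination
  by (relation "measure (\<lambda>(E, V). card V)")
     (auto intro: psubset_card_mono card_Diff1_less simp: card_gt_0_iff)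

definition degree :: "nat set set \<Rightarrow> nat \<Rightarrow> nat" where
  "degree E u = card {v. v \<noteq> u \<and> {u, v} \<in> E}"

definition max_degree :: "nat \<Rightarrow> nat set set \<Rightarrow> nat" where
  "max_degree n E = Max (degree E ` {..<n})"

definition gnp_prob :: "nat \<Rightarrow> real \<Rightarrow> (nat set set \<Rightarrow> bool) \<Rightarrow> real" where
  "gnp_prob n p P =
     (\<Sum>S\<in>{S. S \<subseteq> all_pairs n \<and> P S}.
        p ^ card S * (1 - p) ^ (card (all_pairs n) - card S))"

end

theory Submission
  imports Defs
begin

text \<open>Since \<open>H \<subseteq> H \<union> G\<close>, only \<open>td (H \<union> G) \<ge> c n\<^sup>2 p / \<Delta>\<close> needs proof. A graph of
  treedepth \<open>t\<close> has a set \<open>S\<close> of at most \<open>t\<close> vertices after whose removal every component has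
  at most \<open>n/2\<close> vertices. Walk around a spanning tree of \<open>H\<close>: the closed walk has length
  \<open>< 2n\<close> and visits every vertex at most \<open>\<Delta> + 1\<close> times. Cut it into chunks of length
  \<open>L \<approx> 1/(p n)\<close>. If \<open>t\<close> were much smaller than \<open>n\<^sup>2 p / \<Delta>\<close>, the vertices of \<open>S\<close> would meet
  only few chunks, the remaining chunks would cover almost all vertices, and each of them would lie
  inside one component of \<open>(H \<union> G) - S\<close>. Grouping components gives two unions of chunks, each of
  size \<open>\<ge> n/8\<close>, with no edge of \<open>G\<close> between them. There are at most \<open>4^(2n/L + 1)\<close> pairs of
  unions of chunks, and for each the probability that \<open>G\<close> has no edge between them is at most
  \<open>exp (- p n\<^sup>2 / 64)\<close>; a union bound finishes the proof.\<close>

lemma adj_in_sym: "adj_in E V u v \<Longrightarrow> adj_in E V v u"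
  unfolding adj_in_def by (auto simp: insert_commute)

lemma adj_in_rtranclp_sym: "(adj_in E V)\<^sup>*\<^sup>* u v \<Longrightarrow> (adj_in E V)\<^sup>*\<^sup>* v u"
proof (induction rule: rtranclp_induct)
  case (step y z)
  then show ?case by (meson adj_in_sym converse_rtranclp_into_rtranclp)
qed simp

lemma adj_in_rtranclp_mono:
  assumes "(adj_in E V)\<^sup>*\<^sup>* u v" "E \<subseteq> E'" "V \<subseteq> V'"
  shows "(adj_in E' V')\<^sup>*\<^sup>* u v"
  using assms(1)
proof (induction rule: rtranclp_induct)
  case (step y z)
  then have "adj_in E' V' y z" using assms(2,3) unfolding adj_in_def by auto
  with step.IH show ?case by (meson rtranclp.rtrancl_into_rtrancl)
qed simp

lemma adj_in_rtranclp_first_step: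
  assumes "(adj_in E V)\<^sup>*\<^sup>* r y" "y \<noteq> r"
  shows "\<exists>u. adj_in E V r u \<and> u \<in> V - {r} \<and> (adj_in E (V - {r}))\<^sup>*\<^sup>* u y"
  using assms
proof (induction rule: rtranclp_induct)
  case (step y z)
  show ?case
  proof (cases "y = r")
    case True
    then show ?thesis using step by (auto simp: adj_in_def)
  next
    case False
    then obtain u where u: "adj_in E V r u" "u \<in> V - {r}" "(adj_in E (V - {r}))\<^sup>*\<^sup>* u y"
      using step by blast
    have "adj_in E (V - {r}) y z" using step(2,4) False by (auto simp: adj_in_def)
    then show ?thesis using u by (meson rtranclp.rtrancl_into_rtrancl)
  qed
qed simp

lemma component_of_subset: "component_of E V u \<subseteq> V"
  unfolding component_of_def by auto

lemma component_of_self: "u \<in> V \<Longrightarrow> u \<in> component_of E V u"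
  unfolding component_of_def by auto

lemma component_of_eq: "v \<in> component_of E V u \<Longrightarrow> component_of E V v = component_of E V u"
  unfolding component_of_def by (auto intro: rtranclp_trans adj_in_rtranclp_sym)

lemma component_of_disjoint:
  "component_of E V a \<noteq> component_of E V b \<Longrightarrow> component_of E V a \<inter> component_of E V b = {}"
  by (metis component_of_eq disjoint_iff)

lemma component_of_mono: "W \<subseteq> V \<Longrightarrow> component_of E W u \<subseteq> component_of E V u"
  unfolding component_of_def by (auto intro: adj_in_rtranclp_mono[where E = E and E' = E])

lemma connected_on_component_of:
  assumes "u \<in> V"
  shows "connected_on E (component_of E V u)"
proof -
  let ?C = "component_of E V u"
  have "(adj_in E ?C)\<^sup>*\<^sup>* u v" if "v \<in> ?C" for v
  proof -
    have "(adj_in E V)\<^sup>*\<^sup>* u v" using that by (simp add: component_of_def)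
    then show ?thesis
    proof (induction rule: rtranclp_induct)
      case (step y z)
      then have "y \<in> ?C" "z \<in> ?C" using assms
        by (auto simp: component_of_def adj_in_def intro: rtranclp.rtrancl_into_rtrancl)
      with step have "adj_in E ?C y z" by (auto simp: adj_in_def)
      with step.IH show ?case by (meson rtranclp.rtrancl_into_rtrancl)
    qed simp
  qed
  then show ?thesis unfolding connected_on_def using component_of_self[OF assms]
    by (metis empty_iff adj_in_rtranclp_sym rtranclp_trans)
qed

lemma component_of_psubset:
  assumes "\<not> connected_on E V" "u \<in> V"
  shows "component_of E V u \<subset> V"
  using component_of_subset[of E V u] connected_on_component_of[OF assms(2), of E] assms(1)
  by auto

lemma connected_on_subset_component_of:
  assumes "connected_on E W" "W \<subseteq> V" "E \<subseteq> E'" "w \<in> W"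
  shows "W \<subseteq> component_of E' V w"
proof
  fix x assume "x \<in> W"
  then have "(adj_in E W)\<^sup>*\<^sup>* w x" using assms(1,4) unfolding connected_on_def by auto
  then have "(adj_in E' V)\<^sup>*\<^sup>* w x" using adj_in_rtranclp_mono assms(2,3) by blast
  then show "x \<in> component_of E' V w" using \<open>x \<in> W\<close> assms(2) unfolding component_of_def by auto
qed

lemma component_of_Diff_eq:
  assumes x: "x \<in> V" and w: "w \<in> component_of E V x - S"
  shows "component_of E (V - S) w = component_of E (component_of E V x - S) w"
proof
  let ?C = "component_of E V x"
  show "component_of E (V - S) w \<subseteq> component_of E (?C - S) w"
  proof
    fix y assume "y \<in> component_of E (V - S) w"
    then have r: "(adj_in E (V - S))\<^sup>*\<^sup>* w y" "y \<in> V - S" by (auto simp: component_of_def)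
    have "y \<in> ?C \<and> (adj_in E (?C - S))\<^sup>*\<^sup>* w y" using r(1)
    proof (induction rule: rtranclp_induct)
      case base then show ?case using w by simp
    next
      case (step y z)
      then have yC: "y \<in> ?C" and wy: "(adj_in E (?C - S))\<^sup>*\<^sup>* w y" by auto
      have "(adj_in E V)\<^sup>*\<^sup>* x z"
        using yC step(2) rtranclp.rtrancl_into_rtrancl[of "adj_in E V" x y z]
        by (auto simp: component_of_def adj_in_def)
      then have "z \<in> ?C" using step(2) by (auto simp: component_of_def adj_in_def)
      then have "adj_in E (?C - S) y z" using step(2) yC by (auto simp: adj_in_def)
      then show ?case using \<open>z \<in> ?C\<close> wy by (meson rtranclp.rtrancl_into_rtrancl)
    qed
    then show "y \<in> component_of E (?C - S) w" using r(2) by (auto simp: component_of_def)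
  qed
  show "component_of E (?C - S) w \<subseteq> component_of E (V - S) w"
    by (rule component_of_mono) (use component_of_subset[of E V x] in auto)
qed

lemma component_of_Diff_singleton_has_neighbor:
  assumes "connected_on E V" "r \<in> V" "c \<in> V - {r}"
  shows "\<exists>u \<in> component_of E (V - {r}) c. adj_in E V r u"
proof -
  have "(adj_in E V)\<^sup>*\<^sup>* r c" using assms unfolding connected_on_def by auto
  then obtain u where u: "adj_in E V r u" "u \<in> V - {r}" "(adj_in E (V - {r}))\<^sup>*\<^sup>* u c"
    using adj_in_rtranclp_first_step[of E V r c] assms(3) by auto
  have "u \<in> component_of E (V - {r}) c"
    using u(2) adj_in_rtranclp_sym[OF u(3)] by (simp add: component_of_def)
  then show ?thesis using u(1) by blast
qed

lemma card_component_of_outside_le: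
  assumes "finite V" "u \<in> V" "u \<notin> component_of E V x"
  shows "card (component_of E V u) \<le> card V - card (component_of E V x)"
proof -
  have "component_of E V u \<noteq> component_of E V x" using component_of_self[OF assms(2)] assms(3) by auto
  then have "component_of E V u \<subseteq> V - component_of E V x"
    using component_of_disjoint component_of_subset by blast
  then have "card (component_of E V u) \<le> card (V - component_of E V x)"
    using assms(1) by (intro card_mono) auto
  also have "\<dots> = card V - card (component_of E V x)"
    by (rule card_Diff_subset[OF finite_subset[OF component_of_subset assms(1)] component_of_subset])
  finally show ?thesis .
qed

lemma card_components_Diff_singleton_le:
  assumes "finite V" "connected_on E V" "r \<in> V"
  shows "card (component_of E (V - {r}) ` (V - {r})) \<le> card {y\<in>V. adj_in E V r y}"
proof -
  let ?V' = "V - {r}" and ?N = "{y\<in>V. adj_in E V r y}"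
  have "component_of E ?V' ` ?V' \<subseteq> component_of E ?V' ` ?N"
  proof
    fix C assume "C \<in> component_of E ?V' ` ?V'"
    then obtain c where c: "c \<in> ?V'" "C = component_of E ?V' c" by auto
    obtain u where u: "u \<in> C" "adj_in E V r u"
      using component_of_Diff_singleton_has_neighbor[OF assms(2,3) c(1)] c(2) by blast
    have "component_of E ?V' u = C" using component_of_eq u(1) c(2) by metis
    moreover have "u \<in> ?N" using u(2) by (auto simp: adj_in_def)
    ultimately show "C \<in> component_of E ?V' ` ?N" by blast
  qed
  then have "card (component_of E ?V' ` ?V') \<le> card (component_of E ?V' ` ?N)"
    using assms(1) by (intro card_mono) auto
  also have "\<dots> \<le> card ?N" using assms(1) by (intro card_image_le) auto
  finally show ?thesis .
qed

section \<open>Treedepth\<close>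

declare td.simps[simp del]

lemma td_empty: "td E {} = 0"
  by (subst td.simps) simp

lemma td_card_1: "card V = 1 \<Longrightarrow> td E V = 1"
  by (subst td.simps) (auto dest: card_eq_SucD)

lemma td_connected:
  "finite V \<Longrightarrow> card V \<ge> 2 \<Longrightarrow> connected_on E V \<Longrightarrow>
   td E V = 1 + Min ((\<lambda>v. td E (V - {v})) ` V)"
  by (subst td.simps) auto

lemma td_not_connected:
  "finite V \<Longrightarrow> card V \<ge> 2 \<Longrightarrow> \<not> connected_on E V \<Longrightarrow>
   td E V = Max ((\<lambda>C. td E C) ` {C \<in> components E V. C \<subset> V})"
  by (subst td.simps) auto

lemma td_component_of_le:
  assumes "finite V" "card V \<ge> 2" "\<not> connected_on E V" "u \<in> V"
  shows "td E (component_of E V u) \<le> td E V"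
  unfolding td_not_connected[OF assms(1-3)]
  using component_of_psubset[OF assms(3,4)] assms(1,4) by (intro Max_ge) (auto simp: components_def)

lemma td_not_connected_le:
  assumes "finite V" "card V \<ge> 2" "\<not> connected_on E V"
    and "\<And>u. u \<in> V \<Longrightarrow> td E (component_of E V u) \<le> k"
  shows "td E V \<le> k"
proof -
  let ?CC = "{C \<in> components E V. C \<subset> V}"
  obtain u where "u \<in> V" using assms(2) by fastforce
  then have "component_of E V u \<in> ?CC"
    using component_of_psubset[OF assms(3)] by (auto simp: components_def)
  then have "?CC \<noteq> {}" by blast
  moreover have "finite ?CC" using assms(1) by (simp add: components_def)
  moreover have "\<forall>C \<in> ?CC. td E C \<le> k" using assms(4) by (auto simp: components_def)
  ultimately show ?thesis unfolding td_not_connected[OF assms(1-3)] by (simp add: Max_le_iff)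
qed

lemma td_connected_le_Diff:
  "finite V \<Longrightarrow> card V \<ge> 2 \<Longrightarrow> connected_on E V \<Longrightarrow> v \<in> V \<Longrightarrow> td E V \<le> 1 + td E (V - {v})"
  by (simp add: td_connected Min_le)

lemma td_connected_obtain:
  assumes "finite V" "card V \<ge> 2" "connected_on E V"
  obtains v where "v \<in> V" "td E V = 1 + td E (V - {v})"
proof -
  have "Min ((\<lambda>v. td E (V - {v})) ` V) \<in> (\<lambda>v. td E (V - {v})) ` V"
    using assms(1,2) by (intro Min_in) auto
  then show ?thesis using td_connected[OF assms] that by auto
qed

lemma card_ge_2_if_not_card_1: "finite V \<Longrightarrow> V \<noteq> {} \<Longrightarrow> card V \<noteq> 1 \<Longrightarrow> card V \<ge> 2"
  by (cases "card V") (auto simp: card_gt_0_iff)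

lemma td_ge_1: "finite V \<Longrightarrow> V \<noteq> {} \<Longrightarrow> 1 \<le> td E V"
proof (induction "card V" arbitrary: V rule: less_induct)
  case less
  show ?case
  proof (cases "card V = 1")
    case True then show ?thesis by (simp add: td_card_1)
  next
    case False
    then have V2: "card V \<ge> 2" using card_ge_2_if_not_card_1 less.prems by blast
    show ?thesis
    proof (cases "connected_on E V")
      case True then show ?thesis using td_connected[OF less.prems(1) V2 True] by simp
    next
      case nc: False
      obtain u where u: "u \<in> V" using less.prems by auto
      have C: "component_of E V u \<subset> V" using component_of_psubset[OF nc u] .
      have "1 \<le> td E (component_of E V u)"
        using less.prems(1) C component_of_self[OF u]
        by (intro less.hyps) (auto intro: psubset_card_mono finite_subset)
      also have "\<dots> \<le> td E V" using td_component_of_le[OF less.prems(1) V2 nc u] .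
      finally show ?thesis .
    qed
  qed
qed

lemma td_mono: "finite V \<Longrightarrow> W \<subseteq> V \<Longrightarrow> E \<subseteq> E' \<Longrightarrow> td E W \<le> td E' V"
proof (induction "card V + card W" arbitrary: V W rule: less_induct)
  case less
  have fW: "finite W" using less.prems finite_subset by blast
  consider "W = {}" | "card W = 1" | "card W \<ge> 2"
    using card_ge_2_if_not_card_1[OF fW] by blast
  then show ?case
  proof cases
    case 1 then show ?thesis by (simp add: td_empty)
  next
    case 2
    then have "V \<noteq> {}" using less.prems(2) by auto
    then show ?thesis using td_ge_1[OF less.prems(1)] td_card_1[OF 2] by metis
  next
    case W2: 3
    have V2: "card V \<ge> 2" using W2 card_mono[OF less.prems(1,2)] by linarith
    show ?thesis
    proof (cases "connected_on E W")
      case False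
      show ?thesis
      proof (rule td_not_connected_le[OF fW W2 False])
        fix u assume "u \<in> W"
        then have "component_of E W u \<subset> W" using component_of_psubset[OF False] by blast
        then show "td E (component_of E W u) \<le> td E' V"
          using less.prems fW by (intro less.hyps) (auto intro: psubset_card_mono)
      qed
    next
      case cW: True
      show ?thesis
      proof (cases "connected_on E' V")
        case True
        obtain v where v: "v \<in> V" "td E' V = 1 + td E' (V - {v})"
          using td_connected_obtain[OF less.prems(1) V2 True] .
        have Vv: "card (V - {v}) < card V" by (rule card_Diff1_less[OF less.prems(1) v(1)])
        show ?thesis
        proof (cases "v \<in> W")
          case False
          then have "td E W \<le> td E' (V - {v})"
            using less.prems Vv by (intro less.hyps) auto
          then show ?thesis using v(2) by linarith
        next
          case True
          have "td E W \<le> 1 + td E (W - {v})" using td_connected_le_Diff[OF fW W2 cW True] .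
          also have "td E (W - {v}) \<le> td E' (V - {v})"
            using less.prems Vv card_Diff1_less[OF fW True] by (intro less.hyps) auto
          finally show ?thesis using v(2) by linarith
        qed
      next
        case ncV: False
        obtain w where w: "w \<in> W" using W2 by fastforce
        then have wV: "w \<in> V" using less.prems(2) by auto
        let ?C = "component_of E' V w"
        have "W \<subseteq> ?C" using connected_on_subset_component_of[OF cW less.prems(2,3) w] .
        moreover have "?C \<subset> V" using component_of_psubset[OF ncV wV] .
        ultimately have "td E W \<le> td E' ?C"
          using less.prems by (intro less.hyps) (auto intro: psubset_card_mono finite_subset)
        also have "\<dots> \<le> td E' V" using td_component_of_le[OF less.prems(1) V2 ncV wV] .
        finally show ?thesis .
      qed
    qed
  qed
qed

text \<open>Descend along the recursion of \<open>td\<close>: remove the minimising vertex while the graph is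
  connected, and otherwise pass to the unique component with more than \<open>K\<close> vertices.\<close>

lemma separator_of_large_component:
  assumes "finite V" "x \<in> V" "card V \<le> card (component_of E V x) + K"
    and "S \<subseteq> component_of E V x"
    and "\<forall>u \<in> component_of E V x - S. card (component_of E (component_of E V x - S) u) \<le> K"
  shows "\<forall>u \<in> V - S. card (component_of E (V - S) u) \<le> K"
proof
  fix u assume u: "u \<in> V - S"
  let ?C = "component_of E V x"
  show "card (component_of E (V - S) u) \<le> K"
  proof (cases "u \<in> ?C")
    case True
    then show ?thesis using component_of_Diff_eq[OF assms(2), where w = u and S = S] assms(5) u by auto
  next
    case False
    then have "card (component_of E V u) \<le> card V - card ?C"
      using card_component_of_outside_le[OF assms(1)] u by blast
    then have "card (component_of E V u) \<le> K" using assms(3) by linarith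
    moreover have "component_of E (V - S) u \<subseteq> component_of E V u"
      by (rule component_of_mono) auto
    ultimately show ?thesis
      using card_mono[OF finite_subset[OF component_of_subset assms(1)]] le_trans by blast
  qed
qed

lemma td_balanced_separator:
  assumes "finite V" "card V \<le> 2 * K"
  shows "\<exists>S \<subseteq> V. card S \<le> td E V \<and> (\<forall>u \<in> V - S. card (component_of E (V - S) u) \<le> K)"
  using assms
proof (induction "card V" arbitrary: V rule: less_induct)
  case less
  have comp_le_V: "card (component_of E W u) \<le> card W" if "finite W" for W u
    using card_mono[OF that component_of_subset] .
  show ?case
  proof (cases "\<forall>u \<in> V. card (component_of E V u) \<le> K")
    case True then show ?thesis by (intro exI[of _ "{}"]) auto
  next
    case False
    then obtain x where x: "x \<in> V" "card (component_of E V x) > K" by (auto simp: not_le)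
    then have V2: "card V \<ge> 2" using less.prems comp_le_V[of V x] by linarith
    show ?thesis
    proof (cases "connected_on E V")
      case True
      obtain v where v: "v \<in> V" "td E V = 1 + td E (V - {v})"
        using td_connected_obtain[OF less.prems(1) V2 True] .
      have "card (V - {v}) < card V" by (rule card_Diff1_less[OF less.prems(1) v(1)])
      moreover have "card (V - {v}) \<le> 2 * K" using less.prems(2) calculation by linarith
      ultimately obtain S where S: "S \<subseteq> V - {v}" "card S \<le> td E (V - {v})"
        "\<forall>u \<in> V - {v} - S. card (component_of E (V - {v} - S) u) \<le> K"
        using less.hyps less.prems(1) by blast
      have "card (insert v S) \<le> td E V"
        using S(2) v(2) finite_subset[OF S(1)] less.prems(1) by (simp add: card_insert_if)
      moreover have "V - insert v S = V - {v} - S" by auto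
      ultimately show ?thesis using S(1,3) v(1) by (intro exI[of _ "insert v S"]) auto
    next
      case nc: False
      let ?C = "component_of E V x"
      have C: "?C \<subset> V" by (rule component_of_psubset[OF nc x(1)])
      have fC: "finite ?C" using finite_subset[OF component_of_subset less.prems(1)] .
      obtain S where S: "S \<subseteq> ?C" "card S \<le> td E ?C"
        "\<forall>u \<in> ?C - S. card (component_of E (?C - S) u) \<le> K"
        using less.hyps[OF psubset_card_mono[OF less.prems(1) C] fC] less.prems(2)
          card_mono[OF less.prems(1) component_of_subset, of E x] by auto
      have "\<forall>u \<in> V - S. card (component_of E (V - S) u) \<le> K"
        using separator_of_large_component[OF less.prems(1) x(1) _ S(1,3)] x(2) less.prems(2) by simp
      then show ?thesis
        using S(1,2) td_component_of_le[OF less.prems(1) V2 nc x(1)] component_of_subset[of E V x]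
        by (intro exI[of _ S]) auto
    qed
  qed
qed

section \<open>A closed walk visiting every vertex at most \<open>\<Delta> + 1\<close> times\<close>

definition degrees_le :: "nat set set \<Rightarrow> nat set \<Rightarrow> nat \<Rightarrow> bool" where
  "degrees_le E V D \<longleftrightarrow> (\<forall>x\<in>V. card {y\<in>V. adj_in E V x y} \<le> D)"

definition closed_walk :: "nat set set \<Rightarrow> nat set \<Rightarrow> nat \<Rightarrow> nat list \<Rightarrow> bool" where
  "closed_walk E V r w \<longleftrightarrow> w \<noteq> [] \<and> hd w = r \<and> last w = r \<and> successively (adj_in E V) w"

lemma degrees_le_subset:
  assumes "degrees_le E V D" "W \<subseteq> V" "finite V"
  shows "degrees_le E W D"
  unfolding degrees_le_def
proof
  fix x assume x: "x \<in> W"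
  have "{y\<in>W. adj_in E W x y} \<subseteq> {y\<in>V. adj_in E V x y}"
    using assms(2) by (auto simp: adj_in_def)
  then have "card {y\<in>W. adj_in E W x y} \<le> card {y\<in>V. adj_in E V x y}"
    using assms(3) by (intro card_mono) auto
  also have "\<dots> \<le> D" using assms(1,2) x unfolding degrees_le_def by auto
  finally show "card {y\<in>W. adj_in E W x y} \<le> D" .
qed

lemma degrees_le_max_degree:
  assumes "is_graph n H"
  shows "degrees_le H {..<n} (max_degree n H)"
  unfolding degrees_le_def
proof
  fix x assume x: "x \<in> {..<n}"
  have "{v. v \<noteq> x \<and> {x, v} \<in> H} \<subseteq> {..<n}"
    using assms by (auto simp: is_graph_def all_pairs_def doubleton_eq_iff)
  then have "card {y \<in> {..<n}. adj_in H {..<n} x y} \<le> degree H x"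
    unfolding degree_def by (intro card_mono) (auto intro: finite_subset simp: adj_in_def)
  also have "\<dots> \<le> max_degree n H" unfolding max_degree_def using x by (intro Max_ge) auto
  finally show "card {y \<in> {..<n}. adj_in H {..<n} x y} \<le> max_degree n H" .
qed

lemma closed_walks_splice:
  assumes "finite QQ" "pairwise disjnt QQ" "r \<notin> \<Union>QQ"
    and walks: "\<forall>C\<in>QQ. \<exists>u w. adj_in E V r u \<and> closed_walk E V u w \<and> set w = C \<and>
                  length w + 1 \<le> 2 * card C \<and> (\<forall>x. count_list w x \<le> D + 1)"
  shows "\<exists>w. closed_walk E V r w \<and> set w = insert r (\<Union>QQ) \<and> length w \<le> 2 * card (\<Union>QQ) + 1 \<and>
             count_list w r \<le> 1 + card QQ \<and> (\<forall>x. x \<noteq> r \<longrightarrow> count_list w x \<le> D + 1)"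
  using assms
proof (induction QQ rule: finite_induct)
  case empty
  show ?case by (intro exI[of _ "[r]"]) (simp add: closed_walk_def)
next
  case (insert C QQ)
  obtain w where w: "closed_walk E V r w" "set w = insert r (\<Union>QQ)"
      "length w \<le> 2 * card (\<Union>QQ) + 1" "count_list w r \<le> 1 + card QQ"
      "\<forall>x. x \<noteq> r \<longrightarrow> count_list w x \<le> D + 1"
    using insert.IH insert.prems by (auto simp: pairwise_insert)
  obtain u wC where wC: "adj_in E V r u" "closed_walk E V u wC" "set wC = C"
      "length wC + 1 \<le> 2 * card C" "\<forall>x. count_list wC x \<le> D + 1"
    using insert.prems(3) by auto
  have dj: "C \<inter> \<Union>QQ = {}"
    using insert.prems(1) insert.hyps(2) by (auto simp: pairwise_insert disjnt_def)
  have fin: "finite C" "finite (\<Union>QQ)"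
    using List.finite_set[of wC] List.finite_set[of w] unfolding wC(3) w(2) by simp_all
  let ?w = "w @ wC @ [r]"
  have "closed_walk E V r ?w"
    using w(1) wC(1,2) adj_in_sym[OF wC(1)] by (simp add: closed_walk_def successively_append_iff)
  moreover have "count_list ?w x \<le> D + 1" if "x \<noteq> r" for x
  proof (cases "x \<in> C")
    case True
    then have "x \<notin> set w" using w(2) dj that by auto
    then show ?thesis using wC(5) that by simp
  next
    case False
    then show ?thesis using w(5) wC(3) that by simp
  qed
  moreover have "count_list ?w r \<le> 1 + card (insert C QQ)"
    using w(4) wC(3) insert.hyps insert.prems(2) by simp
  moreover have "set ?w = insert r (\<Union>(insert C QQ))" using w(2) wC(3) by auto
  moreover have "length ?w \<le> 2 * card (\<Union>(insert C QQ)) + 1"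
    using w(3) wC(4) card_Un_disjoint[OF fin dj] by simp
  ultimately show ?case by blast
qed

text \<open>The root is revisited once per component of \<open>V - {r}\<close>, and each of these contains a
  neighbour of the root, so the root too is visited at most \<open>D + 1\<close> times.\<close>

lemma connected_on_closed_walk:
  "finite V \<Longrightarrow> connected_on E V \<Longrightarrow> r \<in> V \<Longrightarrow> degrees_le E V D \<Longrightarrow>
   \<exists>w. closed_walk E V r w \<and> set w = V \<and> length w + 1 \<le> 2 * card V \<and>
       (\<forall>x. count_list w x \<le> D + 1)"
proof (induction "card V" arbitrary: V r rule: less_induct)
  case less
  let ?V' = "V - {r}"
  let ?QQ = "component_of E ?V' ` ?V'"
  have U: "\<Union>?QQ = ?V'"
    using component_of_subset[of E ?V'] component_of_self[of _ ?V' E] by blast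
  have "\<exists>u w. adj_in E V r u \<and> closed_walk E V u w \<and> set w = C \<and>
              length w + 1 \<le> 2 * card C \<and> (\<forall>x. count_list w x \<le> D + 1)" if "C \<in> ?QQ" for C
  proof -
    obtain c where c: "c \<in> ?V'" "C = component_of E ?V' c" using \<open>C \<in> ?QQ\<close> by auto
    obtain u where u: "u \<in> C" "adj_in E V r u"
      using component_of_Diff_singleton_has_neighbor[OF less.prems(2,3) c(1)] c(2) by blast
    have CV: "C \<subseteq> ?V'" using c(2) component_of_subset by simp
    have fC: "finite C" using CV less.prems(1) by (simp add: finite_subset)
    have "card C \<le> card ?V'" using CV less.prems(1) by (intro card_mono) auto
    then have "card C < card V" using card_Diff1_less[OF less.prems(1,3)] by linarith
    moreover have "connected_on E C" using connected_on_component_of[OF c(1)] c(2) by simp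
    moreover have "degrees_le E C D" using degrees_le_subset[OF less.prems(4) _ less.prems(1)] CV by blast
    ultimately obtain w where w: "closed_walk E C u w" "set w = C" "length w + 1 \<le> 2 * card C"
        "\<forall>x. count_list w x \<le> D + 1"
      using less.hyps[OF _ fC _ u(1)] by blast
    have "successively (adj_in E C) w" using w(1) by (simp add: closed_walk_def)
    then have "successively (adj_in E V) w"
      by (rule successively_mono) (use CV in \<open>auto simp: adj_in_def\<close>)
    then have "closed_walk E V u w" using w(1) by (simp add: closed_walk_def)
    then show ?thesis using u(2) w(2-4) by blast
  qed
  moreover have "pairwise disjnt ?QQ"
    unfolding pairwise_def disjnt_def using component_of_disjoint[of E ?V'] by blast
  ultimately obtain w where w: "closed_walk E V r w" "set w = insert r (\<Union>?QQ)"
      "length w \<le> 2 * card (\<Union>?QQ) + 1" "count_list w r \<le> 1 + card ?QQ"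
      "\<forall>x. x \<noteq> r \<longrightarrow> count_list w x \<le> D + 1"
    using closed_walks_splice[of ?QQ r E V D] less.prems(1) U by auto
  have "card ?QQ \<le> card {y\<in>V. adj_in E V r y}"
    by (rule card_components_Diff_singleton_le[OF less.prems(1-3)])
  also have "\<dots> \<le> D" using less.prems(3,4) unfolding degrees_le_def by blast
  finally have "card ?QQ \<le> D" .
  moreover have "card ?V' + 1 = card V"
    using less.prems(1,3) card_Diff1_less[OF less.prems(1,3)] by (simp add: card_Diff_singleton)
  ultimately have "\<forall>x. count_list w x \<le> D + 1" using w(4,5) by (metis add.commute add_le_mono1 le_trans)
  then show ?case
    using w(1-3) \<open>card ?V' + 1 = card V\<close> U less.prems(3) by (intro exI[of _ w]) auto
qed

definition chunk :: "nat \<Rightarrow> 'a list \<Rightarrow> nat \<Rightarrow> 'a list" where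
  "chunk L w j = take L (drop (j * L) w)"

definition num_chunks :: "nat \<Rightarrow> 'a list \<Rightarrow> nat" where
  "num_chunks L w = length w div L + 1"

definition chunk_union :: "nat \<Rightarrow> 'a list \<Rightarrow> nat set \<Rightarrow> 'a set" where
  "chunk_union L w J = (\<Union>j\<in>J. set (chunk L w j))"

lemma set_chunk_subset: "set (chunk L w j) \<subseteq> set w"
  unfolding chunk_def by (meson order_trans set_drop_subset set_take_subset)

lemma chunk_union_subset: "chunk_union L w J \<subseteq> set w"
  unfolding chunk_union_def by (intro UN_least set_chunk_subset)

lemma finite_chunk_union[simp]: "finite (chunk_union L w J)"
  by (rule finite_subset[OF chunk_union_subset]) simp

lemma card_set_chunk_le: "card (set (chunk L w j)) \<le> L"
  unfolding chunk_def by (metis card_length length_take min.bounded_iff order_refl)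

lemma successively_chunk: "successively P w \<Longrightarrow> successively P (chunk L w j)"
  unfolding chunk_def successively_conv_nth by auto

lemma in_set_chunk:
  assumes "L \<ge> 1" "x \<in> set w"
  shows "\<exists>j < num_chunks L w. x \<in> set (chunk L w j)"
proof -
  obtain i where i: "i < length w" "w ! i = x" using assms(2) by (auto simp: in_set_conv_nth)
  let ?j = "i div L"
  have e: "?j * L + i mod L = i" by (rule div_mult_mod_eq)
  have m: "i mod L < L" using assms(1) by simp
  have lt: "i mod L < length (chunk L w ?j)" using i(1) m e by (simp add: chunk_def, arith)
  have "chunk L w ?j ! (i mod L) = w ! i" using m lt e by (simp add: chunk_def nth_drop)
  then have "x \<in> set (chunk L w ?j)" using lt i(2) by (metis nth_mem)
  moreover have "?j < num_chunks L w"
    unfolding num_chunks_def using i(1) by (simp add: div_le_mono le_imp_less_Suc)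
  ultimately show ?thesis by blast
qed

lemma card_chunks_containing_le:
  assumes "L \<ge> 1"
  shows "card {j. j < num_chunks L w \<and> x \<in> set (chunk L w j)} \<le> count_list w x"
proof -
  let ?I = "{i. i < length w \<and> w ! i = x}"
  have "{j. j < num_chunks L w \<and> x \<in> set (chunk L w j)} \<subseteq> (\<lambda>i. i div L) ` ?I"
  proof
    fix j assume "j \<in> {j. j < num_chunks L w \<and> x \<in> set (chunk L w j)}"
    then obtain i where i: "i < length (chunk L w j)" "chunk L w j ! i = x"
      by (auto simp: in_set_conv_nth)
    then have "i < L" "j * L + i < length w" "w ! (j * L + i) = x"
      by (auto simp: chunk_def nth_drop)
    moreover have "(j * L + i) div L = j" using \<open>i < L\<close> by simp
    ultimately show "j \<in> (\<lambda>i. i div L) ` ?I" by (metis (mono_tags, lifting) image_eqI mem_Collect_eq)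
  qed
  then have "card {j. j < num_chunks L w \<and> x \<in> set (chunk L w j)} \<le> card ((\<lambda>i. i div L) ` ?I)"
    by (intro card_mono) auto
  also have "\<dots> \<le> card ?I" by (intro card_image_le) simp
  also have "\<dots> = count_list w x"
    by (simp add: count_list_eq_length_filter length_filter_conv_card eq_commute)
  finally show ?thesis .
qed

text \<open>Each vertex of \<open>S\<close> spoils at most \<open>D + 1\<close> chunks, each of at most \<open>L\<close> vertices.\<close>

lemma card_outside_chunks_avoiding_le:
  assumes "L \<ge> 1" "finite S" "\<forall>x\<in>S. count_list w x \<le> D + 1"
  shows "card (set w - chunk_union L w {j. j < num_chunks L w \<and> set (chunk L w j) \<inter> S = {}})
         \<le> card S * (D + 1) * L"
proof -
  let ?k = "num_chunks L w"
  let ?Hit = "{j. j < ?k \<and> set (chunk L w j) \<inter> S \<noteq> {}}"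
  have "?Hit \<subseteq> (\<Union>x\<in>S. {j. j < ?k \<and> x \<in> set (chunk L w j)})" by auto
  then have "card ?Hit \<le> card (\<Union>x\<in>S. {j. j < ?k \<and> x \<in> set (chunk L w j)})"
    using assms(2) by (intro card_mono) auto
  also have "\<dots> \<le> (\<Sum>x\<in>S. card {j. j < ?k \<and> x \<in> set (chunk L w j)})"
    by (rule card_UN_le[OF assms(2)])
  also have "\<dots> \<le> (\<Sum>x\<in>S. D + 1)"
  proof (rule sum_mono)
    fix x assume "x \<in> S"
    then show "card {j. j < ?k \<and> x \<in> set (chunk L w j)} \<le> D + 1"
      by (rule le_trans[OF card_chunks_containing_le[OF assms(1)] bspec[OF assms(3)]])
  qed
  finally have Hit: "card ?Hit \<le> card S * (D + 1)" by simp
  have "set w - chunk_union L w {j. j < ?k \<and> set (chunk L w j) \<inter> S = {}} \<subseteq> chunk_union L w ?Hit"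
  proof
    fix x assume x: "x \<in> set w - chunk_union L w {j. j < ?k \<and> set (chunk L w j) \<inter> S = {}}"
    obtain j where j: "j < ?k" "x \<in> set (chunk L w j)"
      using in_set_chunk[OF assms(1) DiffD1[OF x]] by blast
    then have "set (chunk L w j) \<inter> S \<noteq> {}" using x unfolding chunk_union_def by blast
    then show "x \<in> chunk_union L w ?Hit" using j unfolding chunk_union_def by blast
  qed
  then have "card (set w - chunk_union L w {j. j < ?k \<and> set (chunk L w j) \<inter> S = {}})
             \<le> card (chunk_union L w ?Hit)"
    by (intro card_mono) simp_all
  also have "\<dots> \<le> (\<Sum>j\<in>?Hit. card (set (chunk L w j)))"
    unfolding chunk_union_def by (intro card_UN_le) simp
  also have "\<dots> \<le> (\<Sum>j\<in>?Hit. L)" by (intro sum_mono card_set_chunk_le)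
  also have "\<dots> = card ?Hit * L" by simp
  also have "\<dots> \<le> card S * (D + 1) * L" using Hit by (rule mult_right_mono) simp
  finally show ?thesis .
qed

lemma subfamily_card_Union_between:
  assumes "finite CC" "\<forall>C\<in>CC. finite C \<and> card C \<le> K" "pairwise disjnt CC" "a \<le> card (\<Union>CC)"
  shows "\<exists>DD \<subseteq> CC. a \<le> card (\<Union>DD) \<and> card (\<Union>DD) \<le> a + K"
  using assms
proof (induction CC rule: finite_induct)
  case (insert C CC)
  show ?case
  proof (cases "a \<le> card (\<Union>CC)")
    case True
    then show ?thesis using insert.IH insert.prems by (auto simp: pairwise_insert)
  next
    case False
    have "C \<inter> \<Union>CC = {}"
      using insert.prems(2) insert.hyps(2) by (auto simp: pairwise_insert disjnt_def)
    then have "card (\<Union>(insert C CC)) = card C + card (\<Union>CC)"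
      using insert.prems(1) insert.hyps(1) by (simp add: card_Un_disjoint)
    then have "card (\<Union>(insert C CC)) \<le> a + K" using False insert.prems(1) by simp
    then show ?thesis using insert.prems(3) by (intro exI[of _ "insert C CC"]) simp
  qed
qed simp

text \<open>Collect whole components greedily until about half of \<open>U\<close> is covered.\<close>

lemma balanced_split_by_components:
  assumes "finite W" "U \<subseteq> W" "\<forall>u\<in>W. card (component_of E W u) \<le> K"
  shows "\<exists>Y \<subseteq> U. (\<forall>y\<in>Y. \<forall>z\<in>U. (adj_in E W)\<^sup>*\<^sup>* y z \<longrightarrow> z \<in> Y) \<and>
           card U \<le> 2 * card Y + K + 1 \<and> card U \<le> 2 * card (U - Y) + K"
proof -
  define CC where "CC = (\<lambda>u. U \<inter> component_of E W u) ` U"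
  have fU: "finite U" using assms(1,2) finite_subset by blast
  have fCC: "finite CC" unfolding CC_def using fU by simp
  have CC: "\<forall>C\<in>CC. finite C \<and> card C \<le> K"
  proof
    fix C assume "C \<in> CC"
    then obtain u where u: "u \<in> U" "C = U \<inter> component_of E W u" unfolding CC_def by auto
    have "card C \<le> card (component_of E W u)"
      using u(2) assms(1) finite_subset[OF component_of_subset] by (intro card_mono) auto
    then show "finite C \<and> card C \<le> K" using u assms(2,3) fU by fastforce
  qed
  have pw: "pairwise disjnt CC"
    unfolding CC_def pairwise_def disjnt_def using component_of_disjoint[of E W] by blast
  have UCC: "\<Union>CC = U"
    unfolding CC_def using component_of_self[of _ W E] assms(2) by blast
  define a where "a = (card U - K) div 2"
  have "a \<le> card (\<Union>CC)" unfolding UCC a_def by simp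
  then obtain DD where DD: "DD \<subseteq> CC" "a \<le> card (\<Union>DD)" "card (\<Union>DD) \<le> a + K"
    using subfamily_card_Union_between[OF fCC CC pw] by blast
  define Y where "Y = \<Union>DD"
  have YU: "Y \<subseteq> U" unfolding Y_def using DD(1) UCC by auto
  have closed: "z \<in> Y" if "y \<in> Y" "z \<in> U" "(adj_in E W)\<^sup>*\<^sup>* y z" for y z
  proof -
    obtain X where X: "X \<in> DD" "y \<in> X" using \<open>y \<in> Y\<close> unfolding Y_def by auto
    then obtain u where u: "X = U \<inter> component_of E W u" using DD(1) unfolding CC_def by auto
    then have "component_of E W y = component_of E W u" using X(2) component_of_eq by blast
    moreover have "z \<in> component_of E W y"
      using that(2,3) assms(2) by (auto simp: component_of_def)
    ultimately have "z \<in> X" using u that(2) by blast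
    then show ?thesis using X(1) unfolding Y_def by auto
  qed
  have "card (U - Y) = card U - card Y" using card_Diff_subset[OF finite_subset[OF YU fU] YU] .
  moreover have "card Y \<le> card U" using card_mono[OF fU YU] .
  moreover have "card U - K \<le> 2 * a + 1" "2 * a \<le> card U - K" unfolding a_def by presburger+
  ultimately have "card U \<le> 2 * card Y + K + 1 \<and> card U \<le> 2 * card (U - Y) + K"
    using DD(2,3) unfolding Y_def by linarith
  then show ?thesis using YU closed by blast
qed

lemma successively_adj_in_rtranclp_hd:
  "successively (adj_in E V) c \<Longrightarrow> x \<in> set c \<Longrightarrow> (adj_in E V)\<^sup>*\<^sup>* (hd c) x"
proof (induction c)
  case (Cons a c)
  show ?case
  proof (cases "c = []")
    case False
    then have "successively (adj_in E V) c" "adj_in E V a (hd c)"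
      using Cons.prems(1) by (auto simp: successively_Cons)
    then show ?thesis
      using Cons.IH Cons.prems(2) by (auto intro: converse_rtranclp_into_rtranclp)
  qed (use Cons.prems in simp)
qed simp

lemma successively_adj_in_rtranclp:
  "successively (adj_in E V) c \<Longrightarrow> x \<in> set c \<Longrightarrow> y \<in> set c \<Longrightarrow> (adj_in E V)\<^sup>*\<^sup>* x y"
  by (meson adj_in_rtranclp_sym rtranclp_trans successively_adj_in_rtranclp_hd)

lemma successively_adj_in_subset_or_disjoint:
  assumes "successively (adj_in E W) c" "set c \<subseteq> U"
    and closed: "\<forall>y\<in>Y. \<forall>z\<in>U. (adj_in E W)\<^sup>*\<^sup>* y z \<longrightarrow> z \<in> Y"
  shows "set c \<subseteq> Y \<or> set c \<inter> Y = {}"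
  using successively_adj_in_rtranclp[OF assms(1)] assms(2) closed by blast

lemma chunk_union_split_closed:
  assumes "\<forall>j\<in>J. successively (adj_in E W) (chunk L w j)" "Y \<subseteq> chunk_union L w J"
    and "\<forall>y\<in>Y. \<forall>z\<in>chunk_union L w J. (adj_in E W)\<^sup>*\<^sup>* y z \<longrightarrow> z \<in> Y"
  shows "chunk_union L w {j\<in>J. set (chunk L w j) \<subseteq> Y} = Y"
    and "chunk_union L w (J - {j\<in>J. set (chunk L w j) \<subseteq> Y}) = chunk_union L w J - Y"
proof -
  have "set (chunk L w j) \<subseteq> Y \<or> set (chunk L w j) \<inter> Y = {}" if "j \<in> J" for j
  proof (rule successively_adj_in_subset_or_disjoint[OF bspec[OF assms(1) that] _ assms(3)])
    show "set (chunk L w j) \<subseteq> chunk_union L w J" using that unfolding chunk_union_def by blast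
  qed
  then have "chunk_union L w {j\<in>J. set (chunk L w j) \<subseteq> Y} = chunk_union L w J \<inter> Y"
    and "chunk_union L w (J - {j\<in>J. set (chunk L w j) \<subseteq> Y}) = chunk_union L w J - Y"
    by (auto simp: chunk_union_def)
  then show "chunk_union L w {j\<in>J. set (chunk L w j) \<subseteq> Y} = Y"
    and "chunk_union L w (J - {j\<in>J. set (chunk L w j) \<subseteq> Y}) = chunk_union L w J - Y"
    using assms(2) by auto
qed

section \<open>Small treedepth forces an edgeless cut between chunks\<close>

definition cross_pairs :: "'a set \<Rightarrow> 'a set \<Rightarrow> 'a set set" where
  "cross_pairs A B = {{a, b} | a b. a \<in> A \<and> b \<in> B}"

definition chunk_cuts :: "nat \<Rightarrow> nat \<Rightarrow> 'a list \<Rightarrow> (nat set \<times> nat set) set" where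
  "chunk_cuts n L w =
     {(JA, JB). JA \<subseteq> {..<num_chunks L w} \<and> JB \<subseteq> {..<num_chunks L w} \<and>
        n \<le> 8 * card (chunk_union L w JA) \<and> n \<le> 8 * card (chunk_union L w JB) \<and>
        chunk_union L w JA \<inter> chunk_union L w JB = {}}"

lemma cross_pairs_disjoint_if_closed:
  assumes "Y \<subseteq> U" "U \<subseteq> W" "\<forall>y\<in>Y. \<forall>z\<in>U. (adj_in (H \<union> G) W)\<^sup>*\<^sup>* y z \<longrightarrow> z \<in> Y"
  shows "G \<inter> cross_pairs Y (U - Y) = {}"
proof (rule ccontr)
  assume "G \<inter> cross_pairs Y (U - Y) \<noteq> {}"
  then obtain x y where e: "{x, y} \<in> G" "x \<in> Y" "y \<in> U - Y" unfolding cross_pairs_def by auto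
  then have "adj_in (H \<union> G) W x y" using assms(1,2) unfolding adj_in_def by auto
  then have "y \<in> Y" using assms(3) e(2,3) r_into_rtranclp[of "adj_in (H \<union> G) W"] by blast
  then show False using e(3) by blast
qed

lemma empty_chunk_cut_if_td_small:
  assumes w: "set w = {..<n}" "successively (adj_in H {..<n}) w" "\<forall>x. count_list w x \<le> D + 1"
    and L: "L \<ge> 1" and n8: "n \<ge> 8"
    and small: "16 * (td (H \<union> G) {..<n} * (D + 1) * L) \<le> n"
  shows "\<exists>(JA, JB) \<in> chunk_cuts n L w.
           G \<inter> cross_pairs (chunk_union L w JA) (chunk_union L w JB) = {}"
proof -
  define V where "V = {..<n}"
  define R where "R = H \<union> G"
  define K where "K = (n + 1) div 2"
  have cV: "card V = n" unfolding V_def by simp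
  have "card V \<le> 2 * K" unfolding cV K_def by presburger
  then obtain S where S: "S \<subseteq> V" "card S \<le> td R V"
      "\<forall>u \<in> V - S. card (component_of R (V - S) u) \<le> K"
    using td_balanced_separator[of V K R] unfolding V_def by auto
  have fS: "finite S" using S(1) finite_subset unfolding V_def by blast
  define J where "J = {j. j < num_chunks L w \<and> set (chunk L w j) \<inter> S = {}}"
  define U where "U = chunk_union L w J"
  have UV: "U \<subseteq> V - S"
    using chunk_union_subset[of L w J] w(1) unfolding U_def J_def V_def chunk_union_def by blast
  have "card (V - U) \<le> card S * (D + 1) * L"
    using card_outside_chunks_avoiding_le[OF L fS, of w D] w(1,3) unfolding U_def J_def V_def by simp
  also have "\<dots> \<le> td R V * (D + 1) * L" using S(2) by (intro mult_right_mono) auto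
  finally have lost: "16 * card (V - U) \<le> n" using small unfolding R_def V_def by linarith
  have cU: "card (V - U) = n - card U" "card U \<le> n"
    using card_Diff_subset[of U V] card_mono[of V U] UV cV finite_subset
    unfolding V_def by (auto simp del: card_lessThan)
  obtain Y where Y: "Y \<subseteq> U" "\<forall>y\<in>Y. \<forall>z\<in>U. (adj_in R (V - S))\<^sup>*\<^sup>* y z \<longrightarrow> z \<in> Y"
      "card U \<le> 2 * card Y + K + 1" "card U \<le> 2 * card (U - Y) + K"
    using balanced_split_by_components[of "V - S" U R K] UV S(3) unfolding V_def by auto
  have "\<forall>j\<in>J. successively (adj_in R (V - S)) (chunk L w j)"
  proof
    fix j assume "j \<in> J"
    then have c: "set (chunk L w j) \<subseteq> U" unfolding U_def chunk_union_def by blast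
    have "successively (adj_in H V) (chunk L w j)" using successively_chunk[OF w(2)] V_def by simp
    then show "successively (adj_in R (V - S)) (chunk L w j)"
      by (rule successively_mono) (use c UV in \<open>auto simp: adj_in_def R_def\<close>)
  qed
  define JA where "JA = {j\<in>J. set (chunk L w j) \<subseteq> Y}"
  have A: "chunk_union L w JA = Y" and B: "chunk_union L w (J - JA) = U - Y"
    using chunk_union_split_closed[OF \<open>\<forall>j\<in>J. _\<close> Y(1,2)[unfolded U_def]]
    unfolding JA_def U_def by blast+
  have "2 * K \<le> n + 1" unfolding K_def by simp
  then have "n \<le> 8 * card Y" "n \<le> 8 * card (U - Y)"
    using lost cU Y(3,4) n8 by linarith+
  moreover have "JA \<subseteq> {..<num_chunks L w}" "J - JA \<subseteq> {..<num_chunks L w}"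
    unfolding JA_def J_def by auto
  ultimately have "(JA, J - JA) \<in> chunk_cuts n L w" by (auto simp: chunk_cuts_def A B)
  moreover have "G \<inter> cross_pairs Y (U - Y) = {}"
    using cross_pairs_disjoint_if_closed[OF Y(1) UV] Y(2) unfolding R_def by blast
  ultimately show ?thesis by (intro bexI[of _ "(JA, J - JA)"]) (simp_all add: A B)
qed

section \<open>The binomial random graph\<close>

lemma finite_all_pairs: "finite (all_pairs n)"
  by (rule finite_subset[of _ "Pow {..<n}"]) (auto simp: all_pairs_def)

lemma gnp_prob_eq_sum:
  "gnp_prob n p P =
     (\<Sum>S\<in>Pow (all_pairs n). if P S then p ^ card S * (1 - p) ^ (card (all_pairs n) - card S) else 0)"
  unfolding gnp_prob_def
  by (subst sum.inter_filter[symmetric]) (auto simp: finite_all_pairs intro: sum.cong)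

lemma gnp_prob_avoid:
  assumes "F \<subseteq> all_pairs n"
  shows "gnp_prob n p (\<lambda>G. G \<inter> F = {}) = (1 - p) ^ card F"
proof -
  let ?A = "all_pairs n"
  let ?q = "\<lambda>x. if x \<in> F then 0 else p"
  have "(\<Prod>x\<in>?A. ?q x + (1 - p)) = (\<Sum>X\<in>Pow ?A. (\<Prod>x\<in>X. ?q x) * (\<Prod>x\<in>?A - X. 1 - p))"
    by (rule prod_add[OF finite_all_pairs])
  also have "\<dots> = gnp_prob n p (\<lambda>G. G \<inter> F = {})"
    unfolding gnp_prob_eq_sum
  proof (rule sum.cong[OF refl])
    fix X assume X: "X \<in> Pow ?A"
    then have "finite X" using finite_all_pairs finite_subset by auto
    show "(\<Prod>x\<in>X. ?q x) * (\<Prod>x\<in>?A - X. 1 - p) =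
          (if X \<inter> F = {} then p ^ card X * (1 - p) ^ (card ?A - card X) else 0)"
    proof (cases "X \<inter> F = {}")
      case True
      then have "(\<Prod>x\<in>X. ?q x) = p ^ card X" by (simp add: disjoint_iff)
      then show ?thesis using True X \<open>finite X\<close> by (simp add: card_Diff_subset)
    next
      case False
      then show ?thesis using \<open>finite X\<close> by (auto simp: prod_zero)
    qed
  qed
  also have "(\<Prod>x\<in>?A. ?q x + (1 - p)) = (\<Prod>x\<in>?A. if x \<in> F then 1 - p else 1)"
    by (intro prod.cong) auto
  also have "\<dots> = (1 - p) ^ card F"
    using prod.inter_restrict[OF finite_all_pairs[of n], where g = "\<lambda>_. 1 - p" and B = F] assms
    by (simp add: Int_absorb1)
  finally show ?thesis by simp
qed

lemma gnp_prob_True: "gnp_prob n p (\<lambda>G. True) = 1"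
  using gnp_prob_avoid[of "{}" n p] by simp

lemma gnp_prob_compl: "gnp_prob n p (\<lambda>G. \<not> P G) = 1 - gnp_prob n p P"
proof -
  have "gnp_prob n p P + gnp_prob n p (\<lambda>G. \<not> P G) = gnp_prob n p (\<lambda>G. True)"
    unfolding gnp_prob_eq_sum sum.distrib[symmetric] by (intro sum.cong) auto
  then show ?thesis using gnp_prob_True by simp
qed

lemma gnp_prob_mono:
  assumes "0 \<le> p" "p \<le> 1" "\<And>G. G \<subseteq> all_pairs n \<Longrightarrow> P G \<Longrightarrow> Q G"
  shows "gnp_prob n p P \<le> gnp_prob n p Q"
  unfolding gnp_prob_eq_sum by (rule sum_mono) (use assms in auto)

lemma gnp_prob_le_1: "0 \<le> p \<Longrightarrow> p \<le> 1 \<Longrightarrow> gnp_prob n p P \<le> 1"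
  using gnp_prob_mono[of p n P "\<lambda>G. True"] gnp_prob_True by simp

lemma gnp_prob_Bex_le:
  assumes "0 \<le> p" "p \<le> 1" "finite I"
  shows "gnp_prob n p (\<lambda>G. \<exists>i\<in>I. Q i G) \<le> (\<Sum>i\<in>I. gnp_prob n p (Q i))"
  using assms(3)
proof (induction I rule: finite_induct)
  case empty
  then show ?case by (simp add: gnp_prob_eq_sum)
next
  case (insert a I)
  have "gnp_prob n p (\<lambda>G. \<exists>i\<in>insert a I. Q i G) \<le>
        gnp_prob n p (Q a) + gnp_prob n p (\<lambda>G. \<exists>i\<in>I. Q i G)"
    unfolding gnp_prob_eq_sum sum.distrib[symmetric] by (rule sum_mono) (use assms in auto)
  then show ?case using insert by simp
qed

section \<open>Union bound over all chunk cuts\<close>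

lemma cross_pairs_subset_all_pairs:
  assumes "A \<subseteq> {..<n}" "B \<subseteq> {..<n}" "A \<inter> B = {}"
  shows "cross_pairs A B \<subseteq> all_pairs n"
  using assms unfolding cross_pairs_def all_pairs_def by blast

lemma card_cross_pairs:
  assumes "A \<inter> B = {}"
  shows "card (cross_pairs A B) = card A * card B"
proof -
  have "cross_pairs A B = (\<lambda>(a, b). {a, b}) ` (A \<times> B)" unfolding cross_pairs_def by auto
  moreover have "inj_on (\<lambda>(a, b). {a, b}) (A \<times> B)"
    using assms by (auto simp: inj_on_def doubleton_eq_iff)
  ultimately show ?thesis by (simp add: card_image card_cartesian_product)
qed

lemma one_minus_power_le_exp: "0 \<le> p \<Longrightarrow> p \<le> 1 \<Longrightarrow> (1 - p) ^ m \<le> exp (- p * real m)"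
  using exp_ge_add_one_self[of "- p"] power_mono[of "1 - p" "exp (- p)" m]
  by (simp add: exp_of_nat_mult[symmetric] mult.commute)

lemma card_chunk_cuts_le: "card (chunk_cuts n L w) \<le> 4 ^ num_chunks L w"
proof -
  have "chunk_cuts n L w \<subseteq> Pow {..<num_chunks L w} \<times> Pow {..<num_chunks L w}"
    unfolding chunk_cuts_def by auto
  then have "card (chunk_cuts n L w) \<le> card (Pow {..<num_chunks L w} \<times> Pow {..<num_chunks L w})"
    by (intro card_mono) auto
  also have "\<dots> = 4 ^ num_chunks L w"
    by (simp add: card_cartesian_product card_Pow power_mult_distrib[symmetric])
  finally show ?thesis .
qed

lemma gnp_prob_no_cross_edge_le:
  assumes p: "0 \<le> p" "p \<le> 1" and AB: "A \<subseteq> {..<n}" "B \<subseteq> {..<n}" "A \<inter> B = {}"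
    and large: "n \<le> 8 * card A" "n \<le> 8 * card B"
  shows "gnp_prob n p (\<lambda>G. G \<inter> cross_pairs A B = {}) \<le> exp (- p * real n ^ 2 / 64)"
proof -
  have "gnp_prob n p (\<lambda>G. G \<inter> cross_pairs A B = {}) = (1 - p) ^ (card A * card B)"
    using cross_pairs_subset_all_pairs[OF AB] by (simp add: gnp_prob_avoid card_cross_pairs[OF AB(3)])
  also have "\<dots> \<le> exp (- p * real (card A * card B))" by (rule one_minus_power_le_exp[OF p])
  also have "\<dots> \<le> exp (- p * real n ^ 2 / 64)"
  proof -
    have "real n * real n \<le> real (8 * card A) * real (8 * card B)"
      using large by (intro mult_mono) auto
    then have "real n ^ 2 / 64 \<le> real (card A * card B)" by (simp add: power2_eq_square)
    then have "p * (real n ^ 2 / 64) \<le> p * real (card A * card B)"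
      using p(1) by (rule mult_left_mono)
    then show ?thesis by simp
  qed
  finally show ?thesis .
qed

lemma gnp_prob_empty_chunk_cut_le:
  assumes p: "0 \<le> p" "p \<le> 1" and w: "set w \<subseteq> {..<n}"
  shows "gnp_prob n p (\<lambda>G. \<exists>(JA, JB) \<in> chunk_cuts n L w.
                         G \<inter> cross_pairs (chunk_union L w JA) (chunk_union L w JB) = {})
         \<le> 4 ^ num_chunks L w * exp (- p * real n ^ 2 / 64)"
proof -
  let ?F = "\<lambda>c. cross_pairs (chunk_union L w (fst c)) (chunk_union L w (snd c))"
  have "finite (chunk_cuts n L w)"
    by (rule finite_subset[of _ "Pow {..<num_chunks L w} \<times> Pow {..<num_chunks L w}"])
       (auto simp: chunk_cuts_def)
  then have "gnp_prob n p (\<lambda>G. \<exists>c \<in> chunk_cuts n L w. G \<inter> ?F c = {})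
             \<le> (\<Sum>c\<in>chunk_cuts n L w. gnp_prob n p (\<lambda>G. G \<inter> ?F c = {}))"
    by (rule gnp_prob_Bex_le[OF p])
  also have "\<dots> \<le> (\<Sum>c\<in>chunk_cuts n L w. exp (- p * real n ^ 2 / 64))"
  proof (rule sum_mono)
    fix c assume "c \<in> chunk_cuts n L w"
    then show "gnp_prob n p (\<lambda>G. G \<inter> ?F c = {}) \<le> exp (- p * real n ^ 2 / 64)"
      using order_trans[OF chunk_union_subset w]
      by (intro gnp_prob_no_cross_edge_le[OF p]) (auto simp: chunk_cuts_def)
  qed
  also have "\<dots> \<le> 4 ^ num_chunks L w * exp (- p * real n ^ 2 / 64)"
    using card_chunk_cuts_le[of n L w] by (simp add: mult_right_mono flip: of_nat_le_iff)
  finally show ?thesis by (simp add: split_beta)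
qed

lemma exists_chunk_length:
  assumes "0 < x" "x \<le> 2"
  shows "\<exists>L::nat. 1 \<le> L \<and> 512 \<le> x * real L \<and> x * real L \<le> 1024"
proof (intro exI conjI)
  let ?L = "nat \<lceil>512 / x\<rceil>"
  have L: "real ?L = of_int \<lceil>512 / x\<rceil>" using assms(1) by (simp add: of_nat_nat)
  have "256 \<le> 512 / x" using assms by (simp add: field_simps)
  then show "1 \<le> ?L" by linarith
  have "512 / x \<le> real ?L" unfolding L by (rule le_of_int_ceiling)
  then show "512 \<le> x * real ?L" by (simp add: pos_divide_le_eq[OF assms(1)] mult.commute)
  have "real ?L \<le> 512 / x + 1" unfolding L by (rule of_int_ceiling_le_add_one)
  then have "x * real ?L \<le> 512 + x" using assms(1) by (simp add: field_simps)
  then show "x * real ?L \<le> 1024" using assms(2) by linarith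
qed

lemma four_power_le_exp: "(4::real) ^ m \<le> exp (2 * real m)"
proof -
  have "(2::real) \<le> exp 1" using exp_ge_add_one_self[of 1] by simp
  then have "(4::real) \<le> exp 2" using mult_mono[of 2 "exp (1::real)" 2 "exp 1"] by (simp add: exp_add[symmetric])
  then have "(4::real) ^ m \<le> exp 2 ^ m" by (intro power_mono) auto
  then show ?thesis by (simp add: exp_of_nat_mult[symmetric] mult.commute)
qed

lemma four_power_num_chunks_le:
  assumes "length w \<le> 2 * n" "1 \<le> L" "512 \<le> p * real n * real L"
  shows "4 ^ num_chunks L w \<le> 4 * exp (p * real n ^ 2 / 128)"
proof -
  have "real (length w div L) \<le> real (length w) / real L" by (rule of_nat_div_le_of_nat)
  also have "\<dots> \<le> 2 * real n / real L" using assms(1,2) by (intro divide_right_mono) auto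
  also have "\<dots> = 2 * real n * (1 / real L)" by simp
  also have "\<dots> \<le> 2 * real n * (p * real n / 512)"
    using assms(2,3) by (intro mult_left_mono) (auto simp: field_simps)
  finally have "2 * real (length w div L) \<le> p * real n ^ 2 / 128"
    by (simp add: power2_eq_square field_simps)
  then have "exp (2 * real (length w div L)) \<le> exp (p * real n ^ 2 / 128)" by simp
  then have "(4::real) ^ (length w div L) \<le> exp (p * real n ^ 2 / 128)"
    by (rule order_trans[OF four_power_le_exp])
  then show ?thesis unfolding num_chunks_def by simp
qed

lemma separator_budget_if_td_small:
  fixes t t0 D L n :: nat
  assumes "1 \<le> D" "p * real n * real L \<le> 1024" "t0 \<le> t"
    and "real t < 1 / 65536 * (real t0 + real n ^ 2 * p / real D)"
  shows "16 * (t * (D + 1) * L) \<le> n"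
proof -
  have "real t * 65535 \<le> real n ^ 2 * p / real D" using assms(3,4) by simp
  then have tD: "real t * real D * 65535 \<le> real n ^ 2 * p"
    using assms(1) by (simp add: field_simps)
  have "real t * real (D + 1) * real L \<le> real t * (2 * real D) * real L"
    using assms(1) by (intro mult_right_mono mult_left_mono) auto
  also have "\<dots> = 2 * (real t * real D * 65535) * real L / 65535" by simp
  also have "\<dots> \<le> 2 * (real n ^ 2 * p) * real L / 65535"
    using tD by (intro divide_right_mono mult_right_mono mult_left_mono) auto
  also have "\<dots> = 2 * real n * (p * real n * real L) / 65535" by (simp add: power2_eq_square)
  also have "\<dots> \<le> 2 * real n * 1024 / 65535"
    using assms(2) by (intro divide_right_mono mult_left_mono) auto
  finally have "16 * (real t * real (D + 1) * real L) \<le> real n" by simp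
  then have "real (16 * (t * (D + 1) * L)) \<le> real n" by (simp only: of_nat_mult of_nat_numeral)
  then show ?thesis by (simp only: of_nat_le_iff)
qed

text \<open>With \<open>L \<approx> 512 / (p n)\<close> there are at most \<open>4 exp (p n\<^sup>2 / 128)\<close> cuts, against
  \<open>exp (- p n\<^sup>2 / 64)\<close> per cut. The factor \<open>1 / 65536\<close> absorbs the summand \<open>td H\<close>, which
  is at most \<open>td (H \<union> G)\<close>.\<close>

lemma gnp_prob_td_lower_bound:
  assumes n8: "n \<ge> 8" and p: "0 < p" "p \<le> 2 / real n"
    and H: "is_graph n H" "connected_on H {..<n}" "1 \<le> max_degree n H"
  shows "\<bar>1 - gnp_prob n p (\<lambda>G. 1 / 65536 * (real (td H {..<n}) + real n ^ 2 * p / real (max_degree n H))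
                                  \<le> real (td (H \<union> G) {..<n}))\<bar>
         \<le> 4 * exp (- (real n ^ 2 * p) / 128)"
    (is "\<bar>1 - gnp_prob n p ?Good\<bar> \<le> _")
proof -
  define \<Delta> where "\<Delta> = max_degree n H"
  have pn: "0 < p * real n" "p * real n \<le> 2" using n8 p by (auto simp: field_simps)
  have "2 / real n \<le> 1" using n8 by simp
  then have p1: "p \<le> 1" using p(2) by linarith
  obtain L :: nat where L: "1 \<le> L" "512 \<le> p * real n * real L" "p * real n * real L \<le> 1024"
    using exists_chunk_length[OF pn] by blast
  have n0: "0 \<in> {..<n}" using n8 by simp
  obtain w where w: "closed_walk H {..<n} 0 w" "set w = {..<n}" "length w + 1 \<le> 2 * n"
      "\<forall>x. count_list w x \<le> \<Delta> + 1"
    using connected_on_closed_walk[OF finite_lessThan H(2) n0 degrees_le_max_degree[OF H(1)]]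
    unfolding \<Delta>_def by auto
  have bad: "\<exists>(JA, JB) \<in> chunk_cuts n L w.
               G \<inter> cross_pairs (chunk_union L w JA) (chunk_union L w JB) = {}"
    if "\<not> ?Good G" for G
  proof (rule empty_chunk_cut_if_td_small[OF w(2) _ w(4) L(1) n8])
    show "successively (adj_in H {..<n}) w" using w(1) by (simp add: closed_walk_def)
    have "td H {..<n} \<le> td (H \<union> G) {..<n}" by (rule td_mono) auto
    then show "16 * (td (H \<union> G) {..<n} * (\<Delta> + 1) * L) \<le> n"
      using separator_budget_if_td_small[OF H(3) L(3)] that unfolding \<Delta>_def by simp
  qed
  have "gnp_prob n p (\<lambda>G. \<not> ?Good G) \<le> gnp_prob n p (\<lambda>G. \<exists>(JA, JB) \<in> chunk_cuts n L w.
          G \<inter> cross_pairs (chunk_union L w JA) (chunk_union L w JB) = {})"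
    by (rule gnp_prob_mono[OF _ p1]) (use p(1) bad in auto)
  also have "\<dots> \<le> 4 ^ num_chunks L w * exp (- p * real n ^ 2 / 64)"
    by (rule gnp_prob_empty_chunk_cut_le[OF _ p1]) (use p(1) w(2) in auto)
  also have "\<dots> \<le> 4 * exp (p * real n ^ 2 / 128) * exp (- p * real n ^ 2 / 64)"
    using four_power_num_chunks_le[of w n L p] w(3) L by (intro mult_right_mono) auto
  also have "\<dots> = 4 * exp (- (real n ^ 2 * p) / 128)"
    by (simp add: mult.assoc exp_add[symmetric])
  finally show ?thesis using gnp_prob_compl[of n p ?Good] gnp_prob_le_1[OF _ p1] p(1) by simp
qed

lemma tendsto_1_if_exp_bound:
  fixes g X :: "nat \<Rightarrow> real"
  assumes "\<forall>\<^sub>F n in sequentially. \<bar>1 - g n\<bar> \<le> C * exp (- X n / a)"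
    and "filterlim X at_top sequentially" "0 < a"
  shows "g \<longlonglongrightarrow> 1"
proof -
  have "filterlim (\<lambda>n. inverse a * X n) at_top sequentially"
    by (rule filterlim_tendsto_pos_mult_at_top[OF tendsto_const _ assms(2)]) (use assms(3) in simp)
  then have "filterlim (\<lambda>n. - X n / a) at_bot sequentially"
    by (simp add: filterlim_uminus_at_bot divide_inverse mult.commute)
  then have e: "(\<lambda>n. exp (- X n / a)) \<longlonglongrightarrow> 0" by (rule filterlim_compose[OF exp_at_bot])
  have "(\<lambda>n. 1 - C * exp (- X n / a)) \<longlonglongrightarrow> 1 - C * 0"
    and "(\<lambda>n. 1 + C * exp (- X n / a)) \<longlonglongrightarrow> 1 + C * 0"
    by (intro tendsto_diff tendsto_add tendsto_mult tendsto_const e)+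
  moreover have "\<forall>\<^sub>F n in sequentially. 1 - C * exp (- X n / a) \<le> g n"
    and "\<forall>\<^sub>F n in sequentially. g n \<le> 1 + C * exp (- X n / a)"
    using assms(1) by (eventually_elim, simp add: abs_le_iff)+
  ultimately show ?thesis using tendsto_sandwich by fastforce
qed

theorem mainTheorem6:
  "\<exists>c::real. c > 0 \<and>
     (\<forall>(p::nat \<Rightarrow> real) (H::nat \<Rightarrow> nat set set).
        (\<forall>\<^sub>F n in sequentially. 0 < p n \<and> p n \<le> 2 / real n) \<longrightarrow>
        filterlim (\<lambda>n. real n ^ 2 * p n) at_top sequentially \<longrightarrow>
        (\<forall>\<^sub>F n in sequentially.
            is_graph n (H n) \<and> connected_on (H n) {..<n} \<and>
            1 \<le> max_degree n (H n) \<and>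
            real (max_degree n (H n)) \<le> real n ^ 2 * p n / 57600) \<longrightarrow>
        ((\<lambda>n. gnp_prob n (p n)
                (\<lambda>G. real (td (H n \<union> G) {..<n})
                       \<ge> c * (real (td (H n) {..<n})
                              + real n ^ 2 * p n / real (max_degree n (H n)))))
          \<longlonglongrightarrow> 1))"
proof (intro exI[of _ "1 / 65536"] conjI allI impI)
  fix p :: "nat \<Rightarrow> real" and H :: "nat \<Rightarrow> nat set set"
  assume p: "\<forall>\<^sub>F n in sequentially. 0 < p n \<and> p n \<le> 2 / real n"
    and X: "filterlim (\<lambda>n. real n ^ 2 * p n) at_top sequentially"
    and H: "\<forall>\<^sub>F n in sequentially.
              is_graph n (H n) \<and> connected_on (H n) {..<n} \<and> 1 \<le> max_degree n (H n) \<and>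
              real (max_degree n (H n)) \<le> real n ^ 2 * p n / 57600"
  show "(\<lambda>n. gnp_prob n (p n) (\<lambda>G. real (td (H n \<union> G) {..<n}) \<ge>
          1 / 65536 * (real (td (H n) {..<n}) + real n ^ 2 * p n / real (max_degree n (H n)))))
        \<longlonglongrightarrow> 1"
  proof (rule tendsto_1_if_exp_bound[OF _ X, where C = 4 and a = 128])
    show "\<forall>\<^sub>F n in sequentially. \<bar>1 - gnp_prob n (p n) (\<lambda>G. real (td (H n \<union> G) {..<n}) \<ge>
          1 / 65536 * (real (td (H n) {..<n}) + real n ^ 2 * p n / real (max_degree n (H n))))\<bar>
        \<le> 4 * exp (- (real n ^ 2 * p n) / 128)"
      using p H eventually_ge_at_top[of 8]
    proof eventually_elim
      case (elim n)
      then show ?case by (intro gnp_prob_td_lower_bound) auto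
    qed
  qed simp
qed simp

end
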